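(* Let $n,m\ge1$. For each $i\in[n]$ let $d_i$ be a positive integer and $p_{i0}<p_{i1}<\cdots<p_{id_i}$ reals, and let $\mathcal{X}=\prod_{i\in[n]}\{p_{i0},\dots,p_{id_i}\}$. Let $P=\{\boldsymbol{x}\in\mathbb{R}^n: A\boldsymbol{x}\ge \boldsymbol{h}\}$ be a polytope. For each $t\in[m]$ and $i\in[n]$ let $f^t_i:\{p_{i0},\dots,p_{id_i}\}\to[L^t_i,U^t_i]$ and let $\phi^t:\prod_{i\in[n]}[L^t_i,U^t_i]\to\mathbb{R}$ be arbitrary. Define the lifted affine functions $\ell^t_i(\boldsymbol{z}_i)=f^t_i(p_{i0})+\sum_{j\in[d_i]}(f^t_i(p_{ij})-f^t_i(p_{i,j-1}))z_{ij}$ and the finite set $$G=\bigl\{(\boldsymbol{z},\boldsymbol{\mu})\in\operatorname{vert}(\Delta)\times\mathbb{R}^m:\ \mu^t=\phi^t(\ell^t_1(\boldsymbol{z}_1),\dots,\ell^t_n(\boldsymbol{z}_n))\ \forall t\in[m]\bigr\}.$$ Let $E=\{(\boldsymbol{x},\boldsymbol{z},\boldsymbol{\mu}): (\boldsymbol{z},\boldsymbol{\mu})\in\operatorname{conv}(G),\ \boldsymbol{x}\in P,\ \boldsymbol{z}\in\{0,1\}^{\sum_i d_i},\ (x_i,\boldsymbol{z}_i)\in B_i\ \forall i\in[n]\}$. Then $E$ is an MIP formulation of the graph $\{(\boldsymbol{x},\boldsymbol{\mu}):\boldsymbol{x}\in P\cap\mathcal{X},\ \mu^t=\phi^t(f^t_1(x_1),\dots,f^t_n(x_n))\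 \forall t\in[m]\}$. Moreover, when the polyhedral constraint is absent (i.e. $P$ is replaced by $\mathbb{R}^n$), this formulation is ideal.
   Context: $[n]=\{1,\dots,n\}$. For a positive integer $d$, $\Delta^d=\{\boldsymbol{z}\in\mathbb{R}^d:1\ge z_1\ge z_2\ge\cdots\ge z_d\ge0\}$; $\Delta=\Delta^{d_1}\times\cdots\times\Delta^{d_n}$ with $\boldsymbol{z}=(\boldsymbol{z}_1,\dots,\boldsymbol{z}_n)$, $\boldsymbol{z}_i=(z_{i1},\dots,z_{id_i})$; its vertex set is $\operatorname{vert}(\Delta)=\Delta\cap\{0,1\}^{\sum_i d_i}$. The unary binarization polytope is $B_i=\{(x_i,\boldsymbol{z}_i): x_i=p_{i0}+\sum_{j\in[d_i]}(p_{ij}-p_{i,j-1})z_{ij},\ \boldsymbol{z}_i\in\Delta^{d_i}\}$. An MIP formulation of a set $S$ is a set $E=\{(\boldsymbol{x},\boldsymbol{y},\boldsymbol{z})\in Q:\boldsymbol{z}\text{ binary}\}$, $Q$ a polyhedron, whose projection onto the original variables equals $S$; it is ideal if every vertex of its LP relaxation $Q$ (obtained by dropping the binary requirement) has binary $\boldsymbol{z}$. *)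

theory Defs
  imports "HOL-Analysis.Analysis" "HOL-Library.Function_Algebras"
begin

text \<open>Real vector space structure on functions (pointwise), so that the library notions
  convex hull and extreme_point_of can be used on points idx => real.\<close>

instantiation "fun" :: (type, real_vector) real_vector
begin
definition scaleR_fun :: "real \<Rightarrow> ('a \<Rightarrow> 'b) \<Rightarrow> 'a \<Rightarrow> 'b" where
  "scaleR_fun r g = (\<lambda>x. r *\<^sub>R g x)"
instance
  by standard (auto simp: scaleR_fun_def fun_eq_iff algebra_simps)
end

text \<open>Coordinates of the lifted space: x_i, z_ij, mu^t.\<close>
datatype idx = Xc nat | Zc nat nat | Mc nat

type_synonym pt = "idx \<Rightarrow> real"

definition coordsZ :: "nat \<Rightarrow> (nat \<Rightarrow> nat) \<Rightarrow> idx set" where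
  "coordsZ n d = {Zc i j | i j. i \<in> {1..n} \<and> j \<in> {1..d i}}"

definition coordsZM :: "nat \<Rightarrow> nat \<Rightarrow> (nat \<Rightarrow> nat) \<Rightarrow> idx set" where
  "coordsZM n m d = coordsZ n d \<union> {Mc t | t. t \<in> {1..m}}"

definition coords :: "nat \<Rightarrow> nat \<Rightarrow> (nat \<Rightarrow> nat) \<Rightarrow> idx set" where
  "coords n m d = {Xc i | i. i \<in> {1..n}} \<union> coordsZM n m d"

text \<open>A point of R^I, for a finite coordinate set I, is a function vanishing outside I.\<close>
definition supp_in :: "idx set \<Rightarrow> pt \<Rightarrow> bool" where
  "supp_in I v \<longleftrightarrow> (\<forall>k. k \<notin> I \<longrightarrow> v k = 0)"

definition polyhedron_on :: "idx set \<Rightarrow> pt set \<Rightarrow> bool" where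
  "polyhedron_on I Q \<longleftrightarrow> (\<exists>F :: ((idx \<Rightarrow> real) \<times> real) set. finite F \<and>
     Q = {v. supp_in I v \<and> (\<forall>(a,b)\<in>F. (\<Sum>k\<in>I. a k * v k) \<le> b)})"

definition Rn :: "nat \<Rightarrow> (nat \<Rightarrow> real) set" where
  "Rn n = {x. \<forall>i. i \<notin> {1..n} \<longrightarrow> x i = 0}"

definition Pset :: "nat \<Rightarrow> nat \<Rightarrow> (nat \<Rightarrow> nat \<Rightarrow> real) \<Rightarrow> (nat \<Rightarrow> real) \<Rightarrow> (nat \<Rightarrow> real) set" where
  "Pset n r A h = {x \<in> Rn n. \<forall>k<r. (\<Sum>i=1..n. A k i * x i) \<ge> h k}"

definition Xgrid :: "nat \<Rightarrow> (nat \<Rightarrow> nat) \<Rightarrow> (nat \<Rightarrow> nat \<Rightarrow> real) \<Rightarrow> (nat \<Rightarrow> real) set" where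
  "Xgrid n d p = {x \<in> Rn n. \<forall>i\<in>{1..n}. x i \<in> p i ` {0..d i}}"

definition graph_set :: "nat \<Rightarrow> nat \<Rightarrow> (nat \<Rightarrow> nat) \<Rightarrow> (nat \<Rightarrow> nat \<Rightarrow> real) \<Rightarrow> (nat \<Rightarrow> real) set
    \<Rightarrow> (nat \<Rightarrow> nat \<Rightarrow> real \<Rightarrow> real) \<Rightarrow> (nat \<Rightarrow> (nat \<Rightarrow> real) \<Rightarrow> real)
    \<Rightarrow> ((nat \<Rightarrow> real) \<times> (nat \<Rightarrow> real)) set" where
  "graph_set n m d p P f \<phi> = {(x, \<mu>). x \<in> P \<inter> Xgrid n d p \<and> \<mu> \<in> Rn m \<and>
     (\<forall>t\<in>{1..m}. \<mu> t = \<phi> t (\<lambda>i. if i \<in> {1..n} then f t i (x i) else 0))}"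

definition in_Delta_i :: "(nat \<Rightarrow> nat) \<Rightarrow> nat \<Rightarrow> pt \<Rightarrow> bool" where
  "in_Delta_i d i v \<longleftrightarrow> v (Zc i 1) \<le> 1 \<and> (\<forall>j. 1 \<le> j \<and> j < d i \<longrightarrow> v (Zc i (Suc j)) \<le> v (Zc i j))
      \<and> v (Zc i (d i)) \<ge> 0"

definition in_Delta :: "nat \<Rightarrow> (nat \<Rightarrow> nat) \<Rightarrow> pt \<Rightarrow> bool" where
  "in_Delta n d v \<longleftrightarrow> (\<forall>i\<in>{1..n}. in_Delta_i d i v)"

definition z_binary :: "nat \<Rightarrow> (nat \<Rightarrow> nat) \<Rightarrow> pt \<Rightarrow> bool" where
  "z_binary n d v \<longleftrightarrow> (\<forall>k\<in>coordsZ n d. v k \<in> {0,1})"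

definition in_B :: "(nat \<Rightarrow> nat) \<Rightarrow> (nat \<Rightarrow> nat \<Rightarrow> real) \<Rightarrow> nat \<Rightarrow> pt \<Rightarrow> bool" where
  "in_B d p i v \<longleftrightarrow> v (Xc i) = p i 0 + (\<Sum>j=1..d i. (p i j - p i (j - 1)) * v (Zc i j))
      \<and> in_Delta_i d i v"

definition ell :: "(nat \<Rightarrow> nat) \<Rightarrow> (nat \<Rightarrow> nat \<Rightarrow> real) \<Rightarrow> (nat \<Rightarrow> nat \<Rightarrow> real \<Rightarrow> real)
    \<Rightarrow> nat \<Rightarrow> nat \<Rightarrow> pt \<Rightarrow> real" where
  "ell d p f t i v = f t i (p i 0) + (\<Sum>j=1..d i. (f t i (p i j) - f t i (p i (j - 1))) * v (Zc i j))"

definition G_set :: "nat \<Rightarrow> nat \<Rightarrow> (nat \<Rightarrow> nat) \<Rightarrow> (nat \<Rightarrow> nat \<Rightarrow> real)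
    \<Rightarrow> (nat \<Rightarrow> nat \<Rightarrow> real \<Rightarrow> real) \<Rightarrow> (nat \<Rightarrow> (nat \<Rightarrow> real) \<Rightarrow> real) \<Rightarrow> pt set" where
  "G_set n m d p f \<phi> = {v. supp_in (coordsZM n m d) v \<and> in_Delta n d v \<and> z_binary n d v \<and>
     (\<forall>t\<in>{1..m}. v (Mc t) = \<phi> t (\<lambda>i. if i \<in> {1..n} then ell d p f t i v else 0))}"

definition zmu_part :: "pt \<Rightarrow> pt" where
  "zmu_part v = (\<lambda>k. case k of Xc _ \<Rightarrow> 0 | _ \<Rightarrow> v k)"

definition x_part :: "pt \<Rightarrow> nat \<Rightarrow> real" where
  "x_part v = (\<lambda>i. v (Xc i))"

definition mu_part :: "pt \<Rightarrow> nat \<Rightarrow> real" where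
  "mu_part v = (\<lambda>t. v (Mc t))"

definition Q_set :: "nat \<Rightarrow> nat \<Rightarrow> (nat \<Rightarrow> nat) \<Rightarrow> (nat \<Rightarrow> nat \<Rightarrow> real) \<Rightarrow> (nat \<Rightarrow> real) set
    \<Rightarrow> (nat \<Rightarrow> nat \<Rightarrow> real \<Rightarrow> real) \<Rightarrow> (nat \<Rightarrow> (nat \<Rightarrow> real) \<Rightarrow> real) \<Rightarrow> pt set" where
  "Q_set n m d p P f \<phi> = {v. supp_in (coords n m d) v \<and> zmu_part v \<in> convex hull (G_set n m d p f \<phi>)
     \<and> x_part v \<in> P \<and> (\<forall>i\<in>{1..n}. in_B d p i v)}"

definition mip_formulation :: "idx set \<Rightarrow> idx set \<Rightarrow> (pt \<Rightarrow> 'a) \<Rightarrow> pt set \<Rightarrow> 'a set \<Rightarrow> bool" where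
  "mip_formulation I Zs pr Q S \<longleftrightarrow> polyhedron_on I Q \<and>
     pr ` {v \<in> Q. \<forall>k\<in>Zs. v k \<in> {0,1}} = S"

definition ideal_formulation :: "idx set \<Rightarrow> idx set \<Rightarrow> (pt \<Rightarrow> 'a) \<Rightarrow> pt set \<Rightarrow> 'a set \<Rightarrow> bool" where
  "ideal_formulation I Zs pr Q S \<longleftrightarrow> mip_formulation I Zs pr Q S \<and>
     (\<forall>v. v extreme_point_of Q \<longrightarrow> (\<forall>k\<in>Zs. v k \<in> {0,1}))"

end

theory Submission
  imports Defs
begin

text \<open>
  The binary points of Delta^d are the staircases z_j = [j \<le> k], on which the unary
  binarization and every lifted function ell^t_i telescope to p_ik and f^t_i(p_ik). A binary
  point of conv(G) is a convex combination of points of G that share its z-part, and on those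
  points mu is a function of z; so binary points of the relaxation project exactly onto the
  graph. Polyhedrality of conv(G) follows by adding one point at a time and eliminating the
  weight of the new point (Fourier-Motzkin). Without the constraint x \<in> P the relaxation is the
  injective affine image z \<mapsto> (x(z), z) of conv(G), so its extreme points come from extreme
  points of conv(G), i.e. from points of G, whose z-part is binary.
\<close>

lemma scaleR_fun_apply [simp]: "(r *\<^sub>R g) x = r *\<^sub>R g x"
  by (simp add: scaleR_fun_def)

lemma sum_fun_apply: "(sum g S) k = (\<Sum>x\<in>S. g x k)"
  by (induction S rule: infinite_finite_induct) auto

definition inner_on :: "idx set \<Rightarrow> pt \<Rightarrow> pt \<Rightarrow> real" where
  "inner_on I c v = (\<Sum>k\<in>I. c k * v k)"

definition polyhedron_of :: "idx set \<Rightarrow> (pt \<times> real) set \<Rightarrow> pt set" where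
  "polyhedron_of I F = {v. supp_in I v \<and> (\<forall>(c, b)\<in>F. inner_on I c v \<le> b)}"

lemma polyhedron_on_iff: "polyhedron_on I Q \<longleftrightarrow> (\<exists>F. finite F \<and> Q = polyhedron_of I F)"
  by (simp add: polyhedron_on_def polyhedron_of_def inner_on_def)

lemma inner_on_add: "inner_on I c (x + y) = inner_on I c x + inner_on I c y"
  by (simp add: inner_on_def algebra_simps sum.distrib)

lemma inner_on_diff: "inner_on I c (x - y) = inner_on I c x - inner_on I c y"
  by (simp add: inner_on_def algebra_simps sum_subtractf)

lemma inner_on_scaleR: "inner_on I c (r *\<^sub>R x) = r * inner_on I c x"
  by (simp add: inner_on_def algebra_simps sum_distrib_left)

lemma inner_on_zero [simp]: "inner_on I 0 v = 0"
  by (simp add: inner_on_def)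

lemma supp_in_combination: "supp_in I x \<Longrightarrow> supp_in I y \<Longrightarrow> supp_in I (u *\<^sub>R x + w *\<^sub>R y)"
  by (simp add: supp_in_def)

lemma convex_polyhedron_of: "convex (polyhedron_of I F)"
proof (rule convexI)
  fix x y and u w :: real
  assume x: "x \<in> polyhedron_of I F" and y: "y \<in> polyhedron_of I F"
    and uw: "0 \<le> u" "0 \<le> w" "u + w = 1"
  have "inner_on I c (u *\<^sub>R x + w *\<^sub>R y) \<le> b" if "(c, b) \<in> F" for c b
    using x y that uw by (auto simp: polyhedron_of_def inner_on_add inner_on_scaleR intro!: convex_bound_le)
  then show "u *\<^sub>R x + w *\<^sub>R y \<in> polyhedron_of I F"
    using x y by (auto simp: polyhedron_of_def supp_in_combination)
qed

lemma convex_polyhedron_on: "polyhedron_on I Q \<Longrightarrow> convex Q"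
  unfolding polyhedron_on_iff using convex_polyhedron_of by blast

definition linear_form :: "idx set \<Rightarrow> (pt \<Rightarrow> real) \<Rightarrow> bool" where
  "linear_form I g \<longleftrightarrow> (\<exists>c. \<forall>v. supp_in I v \<longrightarrow> g v = inner_on I c v)"

lemma inner_on_indicator:
  assumes "finite I"
  shows "inner_on I (indicator {k}) v = (if k \<in> I then v k else 0)"
proof -
  have "inner_on I (indicator {k}) v = (\<Sum>k'\<in>I. if k' = k then v k' else 0)"
    unfolding inner_on_def by (rule sum.cong) auto
  then show ?thesis using assms by (simp add: sum.delta')
qed

lemma linear_form_zero: "linear_form I (\<lambda>v. 0)"
  unfolding linear_form_def by (rule exI[of _ 0]) (simp add: inner_on_def)

lemma linear_form_coord: "finite I \<Longrightarrow> linear_form I (\<lambda>v. v k)"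
  unfolding linear_form_def
  by (rule exI[of _ "indicator {k}"]) (simp add: inner_on_indicator supp_in_def)

lemma linear_form_const_mult: "linear_form I g \<Longrightarrow> linear_form I (\<lambda>v. a * g v)"
proof (unfold linear_form_def, elim exE)
  fix c assume "\<forall>v. supp_in I v \<longrightarrow> g v = inner_on I c v"
  then have "\<forall>v. supp_in I v \<longrightarrow> a * g v = inner_on I (a *\<^sub>R c) v"
    by (simp add: inner_on_def sum_distrib_left mult.assoc)
  then show "\<exists>c. \<forall>v. supp_in I v \<longrightarrow> a * g v = inner_on I c v" by blast
qed

lemma linear_form_add:
  "linear_form I g \<Longrightarrow> linear_form I g' \<Longrightarrow> linear_form I (\<lambda>v. g v + g' v)"
proof (unfold linear_form_def, elim exE)
  fix c c' assume "\<forall>v. supp_in I v \<longrightarrow> g v = inner_on I c v" "\<forall>v. supp_in I v \<longrightarrow> g' v = inner_on I c' v"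
  then have "\<forall>v. supp_in I v \<longrightarrow> g v + g' v = inner_on I (c + c') v"
    by (simp add: inner_on_def algebra_simps sum.distrib)
  then show "\<exists>c. \<forall>v. supp_in I v \<longrightarrow> g v + g' v = inner_on I c v" by blast
qed

lemma linear_form_diff:
  "linear_form I g \<Longrightarrow> linear_form I g' \<Longrightarrow> linear_form I (\<lambda>v. g v - g' v)"
  using linear_form_add[of I g "\<lambda>v. - 1 * g' v"] linear_form_const_mult[of I g' "- 1"] by simp

lemma linear_form_sum:
  "(\<And>j. j \<in> J \<Longrightarrow> linear_form I (g j)) \<Longrightarrow> linear_form I (\<lambda>v. \<Sum>j\<in>J. g j v)"
proof (induction J rule: infinite_finite_induct)
  case (infinite J)
  then show ?case by (simp add: linear_form_zero)
next
  case empty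
  then show ?case by (simp add: linear_form_zero)
next
  case (insert j J)
  then show ?case using linear_form_add[of I "g j"] by simp
qed

lemma linear_form_inner_on: "linear_form I (inner_on I c)"
  unfolding linear_form_def by blast

lemma polyhedron_on_halfspace:
  assumes "linear_form I g"
  shows "polyhedron_on I {v. supp_in I v \<and> g v \<le> b}"
proof -
  obtain c where c: "\<And>v. supp_in I v \<Longrightarrow> g v = inner_on I c v"
    using assms unfolding linear_form_def by blast
  then have "{v. supp_in I v \<and> g v \<le> b} = polyhedron_of I {(c, b)}"
    by (auto simp: polyhedron_of_def)
  then show ?thesis unfolding polyhedron_on_iff by blast
qed

lemma polyhedron_on_Ball:
  assumes "finite J" and "\<And>j. j \<in> J \<Longrightarrow> polyhedron_on I {v. supp_in I v \<and> P j v}"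
  shows "polyhedron_on I {v. supp_in I v \<and> (\<forall>j\<in>J. P j v)}"
proof -
  obtain F where F: "\<And>j. j \<in> J \<Longrightarrow> finite (F j) \<and> {v. supp_in I v \<and> P j v} = polyhedron_of I (F j)"
    using assms(2) unfolding polyhedron_on_iff by metis
  have "{v. supp_in I v \<and> (\<forall>j\<in>J. P j v)} = polyhedron_of I (\<Union>j\<in>J. F j)"
  proof (intro set_eqI iffI)
    fix v assume "v \<in> {v. supp_in I v \<and> (\<forall>j\<in>J. P j v)}"
    then show "v \<in> polyhedron_of I (\<Union>j\<in>J. F j)"
      using F by (fastforce simp: polyhedron_of_def)
  next
    fix v assume v: "v \<in> polyhedron_of I (\<Union>j\<in>J. F j)"
    have "P j v" if "j \<in> J" for j
    proof -
      have "v \<in> polyhedron_of I (F j)" using v that by (auto simp: polyhedron_of_def)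
      then show ?thesis using F[OF that] by blast
    qed
    with v show "v \<in> {v. supp_in I v \<and> (\<forall>j\<in>J. P j v)}"
      by (simp add: polyhedron_of_def)
  qed
  then show ?thesis unfolding polyhedron_on_iff using F assms(1) by blast
qed

lemma polyhedron_on_conj:
  assumes "polyhedron_on I {v. supp_in I v \<and> P v}" and "polyhedron_on I {v. supp_in I v \<and> P' v}"
  shows "polyhedron_on I {v. supp_in I v \<and> P v \<and> P' v}"
proof -
  obtain F F' where "finite F" "{v. supp_in I v \<and> P v} = polyhedron_of I F"
    and "finite F'" "{v. supp_in I v \<and> P' v} = polyhedron_of I F'"
    using assms unfolding polyhedron_on_iff by blast
  moreover have "polyhedron_of I F \<inter> polyhedron_of I F' = polyhedron_of I (F \<union> F')"
    by (auto simp: polyhedron_of_def)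
  moreover have "{v. supp_in I v \<and> P v \<and> P' v} = {v. supp_in I v \<and> P v} \<inter> {v. supp_in I v \<and> P' v}"
    by blast
  ultimately have "finite (F \<union> F') \<and> {v. supp_in I v \<and> P v \<and> P' v} = polyhedron_of I (F \<union> F')"
    by simp
  then show ?thesis unfolding polyhedron_on_iff by blast
qed

lemma polyhedron_on_imp:
  assumes "C \<Longrightarrow> polyhedron_on I {v. supp_in I v \<and> P v}"
  shows "polyhedron_on I {v. supp_in I v \<and> (C \<longrightarrow> P v)}"
  using assms polyhedron_on_Ball[of "{}" I] by (cases C) auto

lemma polyhedron_on_ge:
  "linear_form I g \<Longrightarrow> polyhedron_on I {v. supp_in I v \<and> b \<le> g v}"
  using polyhedron_on_halfspace[of I "\<lambda>v. - 1 * g v" "- b"] linear_form_const_mult[of I g "- 1"]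
  by simp

lemma polyhedron_on_hyperplane:
  assumes "linear_form I g"
  shows "polyhedron_on I {v. supp_in I v \<and> g v = b}"
proof -
  have "{v. supp_in I v \<and> g v = b} = {v. supp_in I v \<and> g v \<le> b \<and> b \<le> g v}"
    by auto
  then show ?thesis
    using polyhedron_on_conj[OF polyhedron_on_halfspace[of I g b] polyhedron_on_ge[of I g b]] assms
    by simp
qed

lemma finite_exists_between_iff:
  fixes L U :: "real set"
  assumes "finite L" "finite U"
  shows "(\<exists>t. (\<forall>l\<in>L. l \<le> t) \<and> (\<forall>u\<in>U. t \<le> u)) \<longleftrightarrow> (\<forall>l\<in>L. \<forall>u\<in>U. l \<le> u)"
proof
  assume "\<forall>l\<in>L. \<forall>u\<in>U. l \<le> u"
  then show "\<exists>t. (\<forall>l\<in>L. l \<le> t) \<and> (\<forall>u\<in>U. t \<le> u)"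
    using assms
    by (intro exI[of _ "if L = {} then if U = {} then 0 else Min U else Max L"]) auto
qed fastforce

lemma fourier_motzkin:
  fixes a e b :: "'h \<Rightarrow> real"
  assumes "finite H"
  shows "(\<exists>t. \<forall>h\<in>H. a h + t * e h \<le> b h) \<longleftrightarrow>
    (\<forall>h\<in>H. e h = 0 \<longrightarrow> a h \<le> b h) \<and>
    (\<forall>h\<in>H. \<forall>h'\<in>H. 0 < e h \<longrightarrow> e h' < 0 \<longrightarrow> e h * a h' - e h' * a h \<le> e h * b h' - e h' * b h)"
proof -
  define bound where "bound h = (b h - a h) / e h" for h
  let ?lo = "bound ` {h\<in>H. e h < 0}" and ?up = "bound ` {h\<in>H. 0 < e h}"
  have constraint: "a h + t * e h \<le> b h \<longleftrightarrow> (e h = 0 \<longrightarrow> a h \<le> b h) \<and>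
      (0 < e h \<longrightarrow> t \<le> bound h) \<and> (e h < 0 \<longrightarrow> bound h \<le> t)" for h t
    by (cases "e h" "0 :: real" rule: linorder_cases)
      (auto simp: bound_def pos_le_divide_eq neg_divide_le_eq mult.commute)
  have pair: "bound h' \<le> bound h \<longleftrightarrow> e h * a h' - e h' * a h \<le> e h * b h' - e h' * b h"
    if "0 < e h" "e h' < 0" for h h'
    using that by (simp add: bound_def field_simps)
  have "(\<exists>t. \<forall>h\<in>H. a h + t * e h \<le> b h) \<longleftrightarrow>
      (\<forall>h\<in>H. e h = 0 \<longrightarrow> a h \<le> b h) \<and> (\<exists>t. (\<forall>l\<in>?lo. l \<le> t) \<and> (\<forall>u\<in>?up. t \<le> u))"
    unfolding constraint by (simp add: ball_conj_distrib) (simp add: Ball_def imp_conjL conj_commute)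
  also have "\<dots> \<longleftrightarrow> (\<forall>h\<in>H. e h = 0 \<longrightarrow> a h \<le> b h) \<and> (\<forall>l\<in>?lo. \<forall>u\<in>?up. l \<le> u)"
    using finite_exists_between_iff[of ?lo ?up] assms by simp
  also have "(\<forall>l\<in>?lo. \<forall>u\<in>?up. l \<le> u) \<longleftrightarrow>
      (\<forall>h\<in>H. \<forall>h'\<in>H. 0 < e h \<longrightarrow> e h' < 0 \<longrightarrow> e h * a h' - e h' * a h \<le> e h * b h' - e h' * b h)"
    by (simp add: pair) blast
  finally show ?thesis .
qed

lemma polyhedron_on_exists_param:
  assumes "finite H" and "\<And>h. h \<in> H \<Longrightarrow> linear_form I (a h)"
  shows "polyhedron_on I {v. supp_in I v \<and> (\<exists>t. \<forall>h\<in>H. a h v + t * e h \<le> b h)}"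
proof -
  have "polyhedron_on I {v. supp_in I v \<and> (\<forall>h\<in>H. e h = 0 \<longrightarrow> a h v \<le> b h) \<and>
    (\<forall>h\<in>H. \<forall>h'\<in>H. 0 < e h \<longrightarrow> e h' < 0 \<longrightarrow> e h * a h' v - e h' * a h v \<le> e h * b h' - e h' * b h)}"
    by (intro polyhedron_on_conj polyhedron_on_Ball polyhedron_on_imp polyhedron_on_halfspace
        linear_form_diff linear_form_const_mult assms)
  then show ?thesis by (simp only: fourier_motzkin[OF assms(1)])
qed

lemma convex_hull_coord_bounded:
  fixes S :: "pt set"
  assumes "finite S"
  shows "\<exists>B. \<forall>z\<in>convex hull S. \<bar>z k\<bar> \<le> B"
proof -
  define B where "B = (\<Sum>s\<in>S. \<bar>s k\<bar>)"
  have "linear (\<lambda>z::pt. z k)" by (rule linearI) simp_all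
  then have "convex ((\<lambda>z::pt. z k) -` cball 0 B)" by (rule convex_linear_vimage) simp
  moreover have "S \<subseteq> (\<lambda>z::pt. z k) -` cball 0 B"
    using assms by (auto simp: B_def intro!: member_le_sum)
  ultimately have "convex hull S \<subseteq> (\<lambda>z::pt. z k) -` cball 0 B" by (rule hull_minimal[rotated])
  then show ?thesis by (auto simp: subset_iff dist_real_def)
qed

lemma bounded_ray_direction_zero:
  fixes y w B :: real
  assumes "\<And>s. 0 \<le> s \<Longrightarrow> \<bar>y + s * w\<bar> \<le> B"
  shows "w = 0"
proof (rule ccontr)
  assume "w \<noteq> 0"
  define s where "s = (\<bar>y\<bar> + B + 1) / \<bar>w\<bar>"
  have "0 \<le> B" using assms[of 0] by simp
  then have "0 \<le> s" by (simp add: s_def)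
  moreover have "s * \<bar>w\<bar> = \<bar>y\<bar> + B + 1" using \<open>w \<noteq> 0\<close> by (simp add: s_def)
  ultimately have "B < \<bar>y + s * w\<bar>" by (simp add: abs_mult)
  with assms[OF \<open>0 \<le> s\<close>] show False by simp
qed

lemma convex_hull_polyhedron_of_recession:
  fixes S :: "pt set"
  assumes "finite S" "S \<noteq> {}" "convex hull S = polyhedron_of I F"
    and "supp_in I a" "supp_in I v" "\<forall>(c, b)\<in>F. inner_on I c v \<le> inner_on I c a"
  shows "v = a"
proof (rule ext)
  fix k
  obtain y where "y \<in> S" using assms(2) by blast
  then have "y \<in> convex hull S" by (rule hull_inc)
  then have y: "y \<in> polyhedron_of I F" by (simp only: assms(3))
  have ray: "y + s *\<^sub>R (v - a) \<in> convex hull S" if "0 \<le> s" for s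
  proof -
    have "inner_on I c (y + s *\<^sub>R (v - a)) \<le> b" if "(c, b) \<in> F" for c b
    proof -
      have "inner_on I c v - inner_on I c a \<le> 0" using assms(6) that by auto
      then have "s * (inner_on I c v - inner_on I c a) \<le> 0"
        by (rule mult_nonneg_nonpos[OF \<open>0 \<le> s\<close>])
      moreover have "inner_on I c y \<le> b" using y that unfolding polyhedron_of_def by fast
      ultimately show ?thesis by (simp add: inner_on_add inner_on_scaleR inner_on_diff)
    qed
    moreover have "supp_in I (y + s *\<^sub>R (v - a))"
      using y assms(4,5) by (simp add: polyhedron_of_def supp_in_def)
    ultimately show ?thesis unfolding assms(3) polyhedron_of_def by blast
  qed
  obtain B where B: "\<forall>z\<in>convex hull S. \<bar>z k\<bar> \<le> B"
    using convex_hull_coord_bounded[OF assms(1)] by blast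
  have "\<bar>y k + s * (v k - a k)\<bar> \<le> B" if "0 \<le> s" for s
    using B ray[OF that] by force
  then have "v k - a k = 0" by (rule bounded_ray_direction_zero)
  then show "v k = a k" by simp
qed

lemma convex_hull_insert_weight_bound:
  assumes "S \<noteq> {}" "convex hull S = polyhedron_of I F" "supp_in I a"
    and "x \<in> convex hull (insert a S)"
  shows "supp_in I x \<and>
    (\<exists>t. 0 \<le> t \<and> t \<le> 1 \<and> (\<forall>(c, b)\<in>F. inner_on I c x + t * (b - inner_on I c a) \<le> b))"
proof -
  obtain u w y where uw: "0 \<le> u" "0 \<le> w" "u + w = 1" and y: "y \<in> polyhedron_of I F"
    and x: "x = u *\<^sub>R a + w *\<^sub>R y"
    using assms(4) convex_hull_insert[OF assms(1)] assms(2) by auto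
  have "inner_on I c x + u * (b - inner_on I c a) \<le> b" if "(c, b) \<in> F" for c b
  proof -
    have "inner_on I c x + u * (b - inner_on I c a) = w * inner_on I c y + u * b"
      using x by (simp add: inner_on_add inner_on_scaleR algebra_simps)
    also have "\<dots> \<le> w * b + u * b"
      using y that uw(2) by (auto simp: polyhedron_of_def intro: mult_left_mono)
    also have "\<dots> = b" using uw(3) by (simp add: distrib_right[symmetric])
    finally show ?thesis .
  qed
  moreover have "supp_in I x" using x y assms(3) by (simp add: supp_in_combination polyhedron_of_def)
  ultimately show ?thesis using uw by auto
qed

lemma mem_convex_hull_insert_of_weight_bound:
  fixes S :: "pt set"
  assumes "finite S" "S \<noteq> {}" "convex hull S = polyhedron_of I F" "supp_in I a"
    and x: "supp_in I x" "0 \<le> t" "t \<le> 1"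
    and tF: "\<And>c b. (c, b) \<in> F \<Longrightarrow> inner_on I c x + t * (b - inner_on I c a) \<le> b"
  shows "x \<in> convex hull (insert a S)"
proof (cases "t = 1")
  case True
  then have "x = a"
    by (intro convex_hull_polyhedron_of_recession[OF assms(1-4) x(1)]) (use tF in auto)
  then show ?thesis by (simp add: hull_inc)
next
  case False
  then have "0 < 1 - t" using x(3) by simp
  define y where "y = (1 / (1 - t)) *\<^sub>R (x - t *\<^sub>R a)"
  have "inner_on I c y \<le> b" if "(c, b) \<in> F" for c b
  proof -
    have "inner_on I c y = (inner_on I c x - t * inner_on I c a) / (1 - t)"
      by (simp add: y_def inner_on_scaleR inner_on_diff)
    also have "\<dots> \<le> b"
      using tF[OF that] by (simp add: pos_divide_le_eq[OF \<open>0 < 1 - t\<close>] algebra_simps)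
    finally show ?thesis .
  qed
  moreover have "supp_in I y" using x(1) assms(4) by (simp add: y_def supp_in_def)
  ultimately have "y \<in> convex hull S" using assms(3) by (auto simp: polyhedron_of_def)
  moreover have "x = t *\<^sub>R a + (1 - t) *\<^sub>R y" using False by (simp add: y_def)
  moreover have "0 \<le> 1 - t" "t + (1 - t) = 1" using \<open>0 < 1 - t\<close> by simp_all
  ultimately show ?thesis
    unfolding convex_hull_insert[OF assms(2)] using x(2) by blast
qed

lemma convex_hull_insert_polyhedron_of:
  fixes S :: "pt set"
  assumes "finite S" "S \<noteq> {}" "convex hull S = polyhedron_of I F" "supp_in I a"
  shows "convex hull (insert a S) = {v. supp_in I v \<and>
    (\<exists>t. 0 \<le> t \<and> t \<le> 1 \<and> (\<forall>(c, b)\<in>F. inner_on I c v + t * (b - inner_on I c a) \<le> b))}"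
  using convex_hull_insert_weight_bound[OF assms(2-4)] mem_convex_hull_insert_of_weight_bound[OF assms]
  by blast

lemma polyhedron_on_convex_hull:
  fixes S :: "pt set"
  assumes "finite I" "finite S" "\<forall>s\<in>S. supp_in I s"
  shows "polyhedron_on I (convex hull S)"
  using assms(2,3)
proof (induction S rule: finite_induct)
  case empty
  have "polyhedron_of I {(0, - 1)} = {}" by (simp add: polyhedron_of_def)
  then show ?case unfolding polyhedron_on_iff by (intro exI[of _ "{(0, - 1)}"]) simp
next
  case (insert a S)
  then have a: "supp_in I a" by simp
  show ?case
  proof (cases "S = {}")
    case True
    have "polyhedron_on I {v. supp_in I v \<and> (\<forall>k\<in>I. v k = a k)}"
      by (intro polyhedron_on_Ball polyhedron_on_hyperplane linear_form_coord assms(1))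
    moreover have "{v. supp_in I v \<and> (\<forall>k\<in>I. v k = a k)} = {a}"
      using a by (auto simp: supp_in_def fun_eq_iff) metis
    ultimately show ?thesis using True by simp
  next
    case False
    obtain F where "finite F" and F: "convex hull S = polyhedron_of I F"
      using insert by (auto simp: polyhedron_on_iff)
    \<comment> \<open>t is the weight of a; the last two triples encode 0 \<le> t \<le> 1\<close>
    define H where "H = (\<lambda>(c, b). (c, b - inner_on I c a, b)) ` F \<union> {(0, - 1, 0), (0, 1, 1)}"
    have "finite H" using \<open>finite F\<close> by (simp add: H_def)
    then have "polyhedron_on I {v. supp_in I v \<and>
        (\<exists>t. \<forall>h\<in>H. inner_on I (fst h) v + t * fst (snd h) \<le> snd (snd h))}"
      by (intro polyhedron_on_exists_param linear_form_inner_on)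
    moreover have "(\<forall>h\<in>H. inner_on I (fst h) v + t * fst (snd h) \<le> snd (snd h)) \<longleftrightarrow>
        0 \<le> t \<and> t \<le> 1 \<and> (\<forall>(c, b)\<in>F. inner_on I c v + t * (b - inner_on I c a) \<le> b)" for v t
      unfolding H_def by auto
    ultimately show ?thesis
      by (simp only: convex_hull_insert_polyhedron_of[OF insert(1) False F a])
  qed
qed

text \<open>For 0/1 values |a - b| = b + (1 - 2 b) a is affine in a, so the weighted distance of
  the x s to y averages to y + (1 - 2 y) y = 0.\<close>
lemma convex_combination_binary_eq:
  fixes u x :: "'a \<Rightarrow> real"
  assumes "finite S" and u0: "\<forall>s\<in>S. 0 \<le> u s" and u1: "sum u S = 1"
    and y: "(\<Sum>s\<in>S. u s * x s) = y" and x01: "\<forall>s\<in>S. x s \<in> {0, 1}" and y01: "y \<in> {0, 1}"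
    and s: "s \<in> S" "0 < u s"
  shows "x s = y"
proof -
  have dist: "\<bar>x s' - y\<bar> = y + (1 - 2 * y) * x s'" if "s' \<in> S" for s'
    using x01 y01 that by auto
  have "(\<Sum>s'\<in>S. u s' * \<bar>x s' - y\<bar>) = (\<Sum>s'\<in>S. y * u s' + (1 - 2 * y) * (u s' * x s'))"
    by (intro sum.cong) (simp_all add: dist algebra_simps)
  also have "\<dots> = y * sum u S + (1 - 2 * y) * (\<Sum>s'\<in>S. u s' * x s')"
    by (simp add: sum.distrib sum_distrib_left)
  also have "\<dots> = 0" using y01 by (auto simp: u1 y)
  finally have "\<forall>s'\<in>S. u s' * \<bar>x s' - y\<bar> = 0"
    using u0 by (subst sum_nonneg_eq_0_iff[OF assms(1), symmetric]) auto
  then show ?thesis using s by fastforce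
qed

lemma convex_hull_binary_face:
  fixes S :: "pt set"
  assumes "finite S" and y: "y \<in> convex hull S"
    and S01: "\<forall>s\<in>S. \<forall>k\<in>K. s k \<in> {0, 1}" and y01: "\<forall>k\<in>K. y k \<in> {0, 1}"
  shows "y \<in> convex hull {s\<in>S. \<forall>k\<in>K. s k = y k}"
proof -
  let ?T = "{s\<in>S. \<forall>k\<in>K. s k = y k}"
  obtain u where u0: "\<forall>s\<in>S. 0 \<le> u s" and u1: "sum u S = 1" and uy: "(\<Sum>s\<in>S. u s *\<^sub>R s) = y"
    using y unfolding convex_hull_finite[OF assms(1)] by blast
  have "(\<Sum>s\<in>S. u s * s k) = y k" for k
    using fun_cong[OF uy, of k] by (simp add: sum_fun_apply)
  then have "s k = y k" if "s \<in> S" "0 < u s" "k \<in> K" for s k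
    using convex_combination_binary_eq[OF assms(1) u0 u1, of "\<lambda>s. s k"] S01 y01 that by auto
  then have zero: "u s = 0" if "s \<in> S - ?T" for s
    using u0 that by force
  have "sum u S = sum u ?T"
    by (rule sum.mono_neutral_right[OF assms(1)]) (use zero in auto)
  moreover have "(\<Sum>s\<in>S. u s *\<^sub>R s) = (\<Sum>s\<in>?T. u s *\<^sub>R s)"
    by (rule sum.mono_neutral_right[OF assms(1)]) (use zero in auto)
  moreover have "finite ?T" using assms(1) by simp
  ultimately show ?thesis
    unfolding convex_hull_finite[OF \<open>finite ?T\<close>] using u0 u1 uy
    by (intro CollectI exI[of _ u]) auto
qed

lemma extreme_point_of_affine_image:
  fixes f :: "'a::real_vector \<Rightarrow> 'b::real_vector"
  assumes inj: "inj_on f C"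
    and affine: "\<And>a b u. a \<in> C \<Longrightarrow> b \<in> C \<Longrightarrow> f ((1 - u) *\<^sub>R a + u *\<^sub>R b) = (1 - u) *\<^sub>R f a + u *\<^sub>R f b"
    and extreme: "f y extreme_point_of f ` C" and "y \<in> C"
  shows "y extreme_point_of C"
  unfolding extreme_point_of_def
proof (intro conjI ballI notI)
  show "y \<in> C" by fact
  fix a b assume a: "a \<in> C" and b: "b \<in> C" and "y \<in> open_segment a b"
  then obtain u where "a \<noteq> b" "0 < u" "u < 1" and y: "y = (1 - u) *\<^sub>R a + u *\<^sub>R b"
    by (auto simp: in_segment)
  then have "f y \<in> open_segment (f a) (f b)"
    using inj a b by (auto simp: in_segment affine inj_on_eq_iff)
  then show False using extreme a b by (auto simp: extreme_point_of_def)
qed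

lemma binary_antitone_staircase:
  fixes z :: "nat \<Rightarrow> real"
  assumes "\<forall>j\<in>{1..D}. z j \<in> {0, 1}" and "\<forall>j. 1 \<le> j \<and> j < D \<longrightarrow> z (Suc j) \<le> z j"
  shows "\<exists>k\<le>D. \<forall>j\<in>{1..D}. z j = of_bool (j \<le> k)"
  using assms
proof (induction D)
  case 0
  then show ?case by simp
next
  case (Suc D)
  then obtain k where k: "k \<le> D" "\<forall>j\<in>{1..D}. z j = of_bool (j \<le> k)"
    by auto
  have "z (Suc D) \<in> {0, 1}" using Suc.prems by auto
  then consider "z (Suc D) = 0" | "z (Suc D) = 1" by blast
  then show ?case
  proof cases
    case 1
    then show ?thesis using k by (intro exI[of _ k]) (auto simp: le_Suc_eq)
  next
    case 2
    have "k = D"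
    proof (cases "D = 0")
      case False
      then have "1 \<le> z D" using Suc.prems(2)[rule_format, of D] 2 by simp
      then show ?thesis using k False by (cases "D \<le> k") auto
    qed (use k in simp)
    then show ?thesis using k 2 by (intro exI[of _ "Suc D"]) (auto simp: le_Suc_eq)
  qed
qed

lemma sum_telescope_atLeast1:
  fixes g :: "nat \<Rightarrow> real"
  shows "(\<Sum>j=1..k. g j - g (j - 1)) = g k - g 0"
  by (induction k) auto

lemma telescoping_staircase:
  fixes g :: "nat \<Rightarrow> real"
  assumes "k \<le> D" and "\<forall>j\<in>{1..D}. z j = of_bool (j \<le> k)"
  shows "g 0 + (\<Sum>j=1..D. (g j - g (j - 1)) * z j) = g k"
proof -
  have "(\<Sum>j=1..D. (g j - g (j - 1)) * z j) = (\<Sum>j=1..D. if j \<in> {..k} then g j - g (j - 1) else 0)"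
    using assms(2) by (intro sum.cong) auto
  also have "\<dots> = (\<Sum>j\<in>{1..D} \<inter> {..k}. g j - g (j - 1))"
    by (rule sum.inter_restrict[symmetric]) simp
  also have "{1..D} \<inter> {..k} = {1..k}" using assms(1) by auto
  finally show ?thesis using sum_telescope_atLeast1[of g k] by simp
qed

lemma mem_coordsZ [simp]:
  "Zc i j \<in> coordsZ n d \<longleftrightarrow> i \<in> {1..n} \<and> j \<in> {1..d i}"
  "Xc i \<notin> coordsZ n d" "Mc t \<notin> coordsZ n d"
  by (auto simp: coordsZ_def)

lemma mem_coordsZM [simp]:
  "Zc i j \<in> coordsZM n m d \<longleftrightarrow> i \<in> {1..n} \<and> j \<in> {1..d i}"
  "Xc i \<notin> coordsZM n m d" "Mc t \<in> coordsZM n m d \<longleftrightarrow> t \<in> {1..m}"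
  by (auto simp: coordsZM_def)

lemma mem_coords [simp]:
  "Zc i j \<in> coords n m d \<longleftrightarrow> i \<in> {1..n} \<and> j \<in> {1..d i}"
  "Xc i \<in> coords n m d \<longleftrightarrow> i \<in> {1..n}" "Mc t \<in> coords n m d \<longleftrightarrow> t \<in> {1..m}"
  by (auto simp: coords_def)

lemma finite_coordsZ [simp]: "finite (coordsZ n d)"
proof -
  have "coordsZ n d = (\<lambda>(i, j). Zc i j) ` (SIGMA i:{1..n}. {1..d i})"
    by (auto simp: coordsZ_def)
  then show ?thesis by simp
qed

lemma finite_coordsZM [simp]: "finite (coordsZM n m d)"
  by (simp add: coordsZM_def)

lemma finite_coords [simp]: "finite (coords n m d)"
  by (simp add: coords_def)

lemma coordsZM_subset_coords: "coordsZM n m d \<subseteq> coords n m d"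
  by (auto simp: coords_def)

lemma polyhedron_on_Delta_i:
  assumes "finite I"
  shows "polyhedron_on I {v. supp_in I v \<and> in_Delta_i d i v}"
proof -
  have "in_Delta_i d i v \<longleftrightarrow> v (Zc i 1) \<le> 1 \<and>
      (\<forall>j\<in>{1..<d i}. v (Zc i (Suc j)) - v (Zc i j) \<le> 0) \<and> 0 \<le> v (Zc i (d i))" for v
    by (auto simp: in_Delta_i_def)
  moreover have "polyhedron_on I {v. supp_in I v \<and> v (Zc i 1) \<le> 1 \<and>
      (\<forall>j\<in>{1..<d i}. v (Zc i (Suc j)) - v (Zc i j) \<le> 0) \<and> 0 \<le> v (Zc i (d i))}"
    by (intro polyhedron_on_conj polyhedron_on_Ball polyhedron_on_halfspace polyhedron_on_ge
        linear_form_diff linear_form_coord assms finite_atLeastLessThan)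
  ultimately show ?thesis by simp
qed

lemma polyhedron_on_B:
  assumes "finite I"
  shows "polyhedron_on I {v. supp_in I v \<and> in_B d p i v}"
proof -
  have "in_B d p i v \<longleftrightarrow>
      v (Xc i) - (\<Sum>j=1..d i. (p i j - p i (j - 1)) * v (Zc i j)) = p i 0 \<and> in_Delta_i d i v" for v
    by (auto simp: in_B_def)
  moreover have "polyhedron_on I {v. supp_in I v \<and>
      v (Xc i) - (\<Sum>j=1..d i. (p i j - p i (j - 1)) * v (Zc i j)) = p i 0 \<and> in_Delta_i d i v}"
    by (intro polyhedron_on_conj polyhedron_on_hyperplane polyhedron_on_Delta_i linear_form_diff
        linear_form_sum linear_form_const_mult linear_form_coord assms)
  ultimately show ?thesis by simp
qed

lemma polyhedron_on_Pset:
  "polyhedron_on (coords n m d) {v. supp_in (coords n m d) v \<and> x_part v \<in> Pset n r A h}"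
proof -
  have "{v. supp_in (coords n m d) v \<and> x_part v \<in> Pset n r A h} =
      {v. supp_in (coords n m d) v \<and> (\<forall>k\<in>{..<r}. h k \<le> (\<Sum>i=1..n. A k i * v (Xc i)))}"
    by (auto simp: Pset_def Rn_def x_part_def supp_in_def)
  moreover have "polyhedron_on (coords n m d)
      {v. supp_in (coords n m d) v \<and> (\<forall>k\<in>{..<r}. h k \<le> (\<Sum>i=1..n. A k i * v (Xc i)))}"
    by (intro polyhedron_on_Ball polyhedron_on_ge linear_form_sum linear_form_const_mult
        linear_form_coord finite_coords finite_lessThan)
  ultimately show ?thesis by simp
qed

lemma inner_on_zmu_part: "inner_on I c (zmu_part v) = inner_on I (zmu_part c) v"
  unfolding inner_on_def zmu_part_def by (rule sum.cong) (auto split: idx.split)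

lemma supp_in_zmu_part: "supp_in I v \<Longrightarrow> supp_in I (zmu_part v)"
  by (auto simp: supp_in_def zmu_part_def split: idx.split)

lemma polyhedron_on_vimage_zmu_part:
  assumes "polyhedron_on I Q"
  shows "polyhedron_on I {v. supp_in I v \<and> zmu_part v \<in> Q}"
proof -
  obtain F where "finite F" and Q: "Q = polyhedron_of I F"
    using assms unfolding polyhedron_on_iff by blast
  have "{v. supp_in I v \<and> zmu_part v \<in> Q} =
      {v. supp_in I v \<and> (\<forall>h\<in>F. inner_on I (zmu_part (fst h)) v \<le> snd h)}"
    by (auto simp: Q polyhedron_of_def supp_in_zmu_part inner_on_zmu_part)
  moreover have "polyhedron_on I {v. supp_in I v \<and> (\<forall>h\<in>F. inner_on I (zmu_part (fst h)) v \<le> snd h)}"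
    by (intro polyhedron_on_Ball polyhedron_on_halfspace linear_form_inner_on \<open>finite F\<close>)
  ultimately show ?thesis by simp
qed

lemma ell_cong:
  "(\<And>j. j \<in> {1..d i} \<Longrightarrow> v (Zc i j) = w (Zc i j)) \<Longrightarrow> ell d p f t i v = ell d p f t i w"
  unfolding ell_def by (intro arg_cong2[where f = "(+)"] refl sum.cong) auto

lemma G_set_Mc:
  assumes "g \<in> G_set n m d p f \<phi>" "t \<in> {1..m}" "\<forall>k\<in>coordsZ n d. g k = y k"
  shows "g (Mc t) = \<phi> t (\<lambda>i. if i \<in> {1..n} then ell d p f t i y else 0)"
proof -
  have "ell d p f t i g = ell d p f t i y" if "i \<in> {1..n}" for i
    using assms(3) that by (intro ell_cong) simp
  then have "(\<lambda>i. if i \<in> {1..n} then ell d p f t i g else 0) =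
      (\<lambda>i. if i \<in> {1..n} then ell d p f t i y else 0)" by auto
  then show ?thesis using assms(1,2) by (simp add: G_set_def)
qed

lemma G_set_eqI:
  assumes g: "g \<in> G_set n m d p f \<phi>" and g': "g' \<in> G_set n m d p f \<phi>"
    and agree: "\<forall>k\<in>coordsZ n d. g k = g' k"
  shows "g = g'"
proof
  fix k
  have supp: "supp_in (coordsZM n m d) g" "supp_in (coordsZM n m d) g'"
    using g g' by (simp_all add: G_set_def)
  show "g k = g' k"
  proof (cases "k \<in> coordsZM n m d")
    case True
    then consider "k \<in> coordsZ n d" | t where "t \<in> {1..m}" "k = Mc t"
      by (auto simp: coordsZM_def)
    then show ?thesis
    proof cases
      case (2 t)
      then show ?thesis using G_set_Mc[OF g 2(1) agree] G_set_Mc[OF g' 2(1), of g'] by simp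
    qed (use agree in blast)
  next
    case False
    then show ?thesis using supp by (simp add: supp_in_def)
  qed
qed

lemma finite_G_set: "finite (G_set n m d p f \<phi>)"
proof -
  let ?r = "\<lambda>g::pt. restrict g (coordsZ n d)"
  have "inj_on ?r (G_set n m d p f \<phi>)"
  proof (rule inj_onI)
    fix g g' assume "g \<in> G_set n m d p f \<phi>" "g' \<in> G_set n m d p f \<phi>" and r: "?r g = ?r g'"
    moreover have "g k = g' k" if "k \<in> coordsZ n d" for k
      using fun_cong[OF r, of k] that by simp
    ultimately show "g = g'" by (intro G_set_eqI) auto
  qed
  moreover have "?r ` G_set n m d p f \<phi> \<subseteq> PiE (coordsZ n d) (\<lambda>_. {0, 1})"
    by (auto simp: G_set_def z_binary_def)
  moreover have "finite (PiE (coordsZ n d) (\<lambda>_. {0::real, 1}))"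
    by (rule finite_PiE) auto
  ultimately show ?thesis using finite_imageD finite_subset by blast
qed

lemma polyhedron_on_Q_set: "polyhedron_on (coords n m d) (Q_set n m d p (Pset n r A h) f \<phi>)"
proof -
  have "\<forall>g\<in>G_set n m d p f \<phi>. supp_in (coords n m d) g"
    using coordsZM_subset_coords[of n m d] unfolding G_set_def supp_in_def by blast
  then show ?thesis
    unfolding Q_set_def
    by (intro polyhedron_on_conj polyhedron_on_vimage_zmu_part polyhedron_on_convex_hull
        polyhedron_on_Pset polyhedron_on_Ball polyhedron_on_B finite_G_set finite_coords
        finite_atLeastAtMost)
qed

lemma convex_hull_G_set_Mc:
  assumes y: "y \<in> convex hull (G_set n m d p f \<phi>)" and y01: "\<forall>k\<in>coordsZ n d. y k \<in> {0, 1}"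
    and t: "t \<in> {1..m}"
  shows "y (Mc t) = \<phi> t (\<lambda>i. if i \<in> {1..n} then ell d p f t i y else 0)"
proof -
  let ?C = "\<phi> t (\<lambda>i. if i \<in> {1..n} then ell d p f t i y else 0)"
  have "y \<in> convex hull {g\<in>G_set n m d p f \<phi>. \<forall>k\<in>coordsZ n d. g k = y k}"
    by (rule convex_hull_binary_face[OF finite_G_set y _ y01]) (auto simp: G_set_def z_binary_def)
  also have "\<dots> \<subseteq> {z. z (Mc t) = ?C}"
  proof (rule hull_minimal)
    show "{g\<in>G_set n m d p f \<phi>. \<forall>k\<in>coordsZ n d. g k = y k} \<subseteq> {z. z (Mc t) = ?C}"
      using G_set_Mc t by blast
    have "linear (\<lambda>z::pt. z (Mc t))" by (rule linearI) simp_all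
    then show "convex {z::pt. z (Mc t) = ?C}"
      using convex_linear_vimage[of "\<lambda>z::pt. z (Mc t)" "{?C}"] by (simp add: vimage_def)
  qed
  finally show ?thesis by simp
qed

lemma zmu_part_simps [simp]:
  "zmu_part v (Zc i j) = v (Zc i j)" "zmu_part v (Mc t) = v (Mc t)" "zmu_part v (Xc i) = 0"
  by (simp_all add: zmu_part_def)

lemma ell_zmu_part [simp]: "ell d p f t i (zmu_part v) = ell d p f t i v"
  by (simp add: ell_def)

lemma in_B_binary_staircase:
  assumes "in_B d p i v" and "\<forall>j\<in>{1..d i}. v (Zc i j) \<in> {0, 1}"
  shows "\<exists>k\<le>d i. v (Xc i) = p i k \<and> (\<forall>t. ell d p f t i v = f t i (p i k))"
proof -
  obtain k where k: "k \<le> d i" "\<forall>j\<in>{1..d i}. v (Zc i j) = of_bool (j \<le> k)"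
    using binary_antitone_staircase[of "d i" "\<lambda>j. v (Zc i j)"] assms
    by (auto simp: in_B_def in_Delta_i_def)
  then have tele: "g 0 + (\<Sum>j=1..d i. (g j - g (j - 1)) * v (Zc i j)) = g k" for g :: "nat \<Rightarrow> real"
    by (intro telescoping_staircase[of k "d i" "\<lambda>j. v (Zc i j)"])
  have "v (Xc i) = p i k" using assms(1) tele[of "p i"] by (simp add: in_B_def)
  moreover have "ell d p f t i v = f t i (p i k)" for t
    using tele[of "\<lambda>j. f t i (p i j)"] by (simp add: ell_def)
  ultimately show ?thesis using k(1) by blast
qed

lemma in_B_staircase:
  assumes "k \<le> d i" and "\<forall>j. v (Zc i j) = of_bool (1 \<le> j \<and> j \<le> k)" and "v (Xc i) = p i k"
  shows "in_B d p i v \<and> ell d p f t i v = f t i (p i k)"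
proof -
  have tele: "g 0 + (\<Sum>j=1..d i. (g j - g (j - 1)) * v (Zc i j)) = g k" for g :: "nat \<Rightarrow> real"
    using assms(1,2) by (intro telescoping_staircase) auto
  have "in_Delta_i d i v" using assms(2) by (simp add: in_Delta_i_def)
  then show ?thesis
    using tele[of "p i"] tele[of "\<lambda>j. f t i (p i j)"] assms(3) by (simp add: in_B_def ell_def)
qed

lemma binary_Q_set_in_graph_set:
  assumes v: "v \<in> Q_set n m d p P f \<phi>" and v01: "\<forall>k\<in>coordsZ n d. v k \<in> {0, 1}"
  shows "(x_part v, mu_part v) \<in> graph_set n m d p P f \<phi>"
proof -
  have supp: "supp_in (coords n m d) v" and hull: "zmu_part v \<in> convex hull (G_set n m d p f \<phi>)"
    and xP: "x_part v \<in> P" and B: "\<forall>i\<in>{1..n}. in_B d p i v"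
    using v by (auto simp: Q_set_def)
  have "\<forall>i\<in>{1..n}. \<exists>k\<le>d i. v (Xc i) = p i k \<and> (\<forall>t. ell d p f t i v = f t i (p i k))"
  proof
    fix i assume i: "i \<in> {1..n}"
    show "\<exists>k\<le>d i. v (Xc i) = p i k \<and> (\<forall>t. ell d p f t i v = f t i (p i k))"
      using B i v01 by (intro in_B_binary_staircase) simp_all
  qed
  then obtain K where K: "\<forall>i\<in>{1..n}. K i \<le> d i \<and> v (Xc i) = p i (K i) \<and>
      (\<forall>t. ell d p f t i v = f t i (p i (K i)))"
    by (elim bchoice[THEN exE])
  have "\<forall>k\<in>coordsZ n d. zmu_part v k \<in> {0, 1}"
  proof
    fix k assume "k \<in> coordsZ n d"
    then show "zmu_part v k \<in> {0, 1}" using v01 by (cases k) auto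
  qed
  then have "mu_part v t = \<phi> t (\<lambda>i. if i \<in> {1..n} then f t i (x_part v i) else 0)"
    if "t \<in> {1..m}" for t
    using convex_hull_G_set_Mc[OF hull _ that] K by (simp add: mu_part_def x_part_def cong: if_cong)
  moreover have "x_part v \<in> Xgrid n d p"
    using supp K by (auto simp: Xgrid_def Rn_def x_part_def supp_in_def)
  moreover have "mu_part v \<in> Rn m"
    using supp by (auto simp: Rn_def mu_part_def supp_in_def)
  ultimately show ?thesis using xP by (simp add: graph_set_def)
qed

lemma graph_set_in_binary_Q_set:
  assumes "(x, \<mu>) \<in> graph_set n m d p P f \<phi>"
  shows "(x, \<mu>) \<in> (\<lambda>v. (x_part v, mu_part v)) ` {v\<in>Q_set n m d p P f \<phi>. \<forall>k\<in>coordsZ n d. v k \<in> {0, 1}}"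
proof -
  have xP: "x \<in> P" and xR: "x \<in> Rn n" and grid: "\<forall>i\<in>{1..n}. x i \<in> p i ` {0..d i}"
    and \<mu>R: "\<mu> \<in> Rn m"
    and \<mu>: "\<forall>t\<in>{1..m}. \<mu> t = \<phi> t (\<lambda>i. if i \<in> {1..n} then f t i (x i) else 0)"
    using assms by (auto simp: graph_set_def Xgrid_def)
  have "\<forall>i\<in>{1..n}. \<exists>k. k \<le> d i \<and> x i = p i k"
    using grid unfolding Ball_def image_iff by fastforce
  then obtain K where K: "\<And>i. i \<in> {1..n} \<Longrightarrow> K i \<le> d i \<and> x i = p i (K i)"
    by (elim bchoice[THEN exE]) blast
  define v where "v = (\<lambda>\<kappa>. case \<kappa> of Xc i \<Rightarrow> x i
       | Zc i j \<Rightarrow> of_bool (i \<in> {1..n} \<and> 1 \<le> j \<and> j \<le> K i) | Mc t \<Rightarrow> \<mu> t)"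
  have B: "in_B d p i v \<and> ell d p f t i v = f t i (x i)" if "i \<in> {1..n}" for i t
  proof -
    have "\<forall>j. v (Zc i j) = of_bool (1 \<le> j \<and> j \<le> K i)" "v (Xc i) = p i (K i)"
      using K[OF that] that by (simp_all add: v_def)
    then show ?thesis using in_B_staircase[of "K i" d i v p f t] K[OF that] by simp
  qed
  have supp: "supp_in (coords n m d) v"
    unfolding supp_in_def
  proof (intro allI impI)
    fix k assume "k \<notin> coords n m d"
    then show "v k = 0" using xR \<mu>R K by (cases k; fastforce simp: v_def Rn_def)
  qed
  have "zmu_part v \<in> G_set n m d p f \<phi>"
  proof -
    have "supp_in (coordsZM n m d) (zmu_part v)"
      using supp by (auto simp: supp_in_def zmu_part_def split: idx.split)
    moreover have "in_Delta n d (zmu_part v)" using B by (simp add: in_Delta_def in_Delta_i_def in_B_def)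
    moreover have "z_binary n d (zmu_part v)" by (auto simp: z_binary_def coordsZ_def v_def)
    moreover have "zmu_part v (Mc t) = \<mu> t" for t by (simp add: v_def)
    ultimately show ?thesis using \<mu> B by (simp add: G_set_def cong: if_cong)
  qed
  moreover have "x_part v = x" "mu_part v = \<mu>" by (simp_all add: x_part_def mu_part_def v_def)
  ultimately have "v \<in> Q_set n m d p P f \<phi>"
    using supp xP B by (simp add: Q_set_def hull_inc)
  moreover have "\<forall>k\<in>coordsZ n d. v k \<in> {0, 1}" by (auto simp: coordsZ_def v_def)
  ultimately show ?thesis
    using \<open>x_part v = x\<close> \<open>mu_part v = \<mu>\<close> by (intro rev_image_eqI[of v]) simp_all
qed

lemma image_binary_Q_set_eq_graph_set:
  "(\<lambda>v. (x_part v, mu_part v)) ` {v\<in>Q_set n m d p P f \<phi>. \<forall>k\<in>coordsZ n d. v k \<in> {0, 1}}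
    = graph_set n m d p P f \<phi>"
  using binary_Q_set_in_graph_set graph_set_in_binary_Q_set by fast

definition lift_x :: "nat \<Rightarrow> (nat \<Rightarrow> nat) \<Rightarrow> (nat \<Rightarrow> nat \<Rightarrow> real) \<Rightarrow> pt \<Rightarrow> pt" where
  "lift_x n d p z = (\<lambda>\<kappa>. case \<kappa> of
      Xc i \<Rightarrow> if i \<in> {1..n} then p i 0 + (\<Sum>j=1..d i. (p i j - p i (j - 1)) * z (Zc i j)) else 0
    | _ \<Rightarrow> z \<kappa>)"

lemma zmu_part_lift_x: "supp_in (coordsZM n m d) z \<Longrightarrow> zmu_part (lift_x n d p z) = z"
  by (rule ext) (auto simp: zmu_part_def lift_x_def supp_in_def split: idx.split)

lemma lift_x_combination:
  "lift_x n d p ((1 - u) *\<^sub>R a + u *\<^sub>R b) = (1 - u) *\<^sub>R lift_x n d p a + u *\<^sub>R lift_x n d p b"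
proof (rule ext)
  fix k
  have "(\<Sum>j=1..d i. (p i j - p i (j - 1)) * ((1 - u) * a (Zc i j) + u * b (Zc i j))) =
      (1 - u) * (\<Sum>j=1..d i. (p i j - p i (j - 1)) * a (Zc i j)) +
      u * (\<Sum>j=1..d i. (p i j - p i (j - 1)) * b (Zc i j))" for i
    by (simp add: sum_distrib_left sum.distrib[symmetric] algebra_simps)
  then show "lift_x n d p ((1 - u) *\<^sub>R a + u *\<^sub>R b) k = ((1 - u) *\<^sub>R lift_x n d p a + u *\<^sub>R lift_x n d p b) k"
    by (cases k) (simp_all add: lift_x_def algebra_simps)
qed

lemma convex_hull_G_set_subset:
  "convex hull (G_set n m d p f \<phi>) \<subseteq> {z. supp_in (coordsZM n m d) z \<and> in_Delta n d z}"
proof (rule hull_minimal)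
  show "G_set n m d p f \<phi> \<subseteq> {z. supp_in (coordsZM n m d) z \<and> in_Delta n d z}"
    by (auto simp: G_set_def)
  have "polyhedron_on (coordsZM n m d) {z. supp_in (coordsZM n m d) z \<and> (\<forall>i\<in>{1..n}. in_Delta_i d i z)}"
    by (intro polyhedron_on_Ball polyhedron_on_Delta_i finite_coordsZM finite_atLeastAtMost)
  then show "convex {z. supp_in (coordsZM n m d) z \<and> in_Delta n d z}"
    unfolding in_Delta_def by (rule convex_polyhedron_on)
qed

lemma Q_set_Rn_eq_image_lift_x:
  "Q_set n m d p (Rn n) f \<phi> = lift_x n d p ` (convex hull (G_set n m d p f \<phi>))"
proof (intro set_eqI iffI)
  fix v assume v: "v \<in> Q_set n m d p (Rn n) f \<phi>"
  then have "lift_x n d p (zmu_part v) = v"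
    by (intro ext) (auto simp: Q_set_def in_B_def lift_x_def supp_in_def split: idx.split)
  moreover have "zmu_part v \<in> convex hull (G_set n m d p f \<phi>)" using v by (simp add: Q_set_def)
  ultimately show "v \<in> lift_x n d p ` (convex hull (G_set n m d p f \<phi>))" by (metis image_eqI)
next
  fix v assume "v \<in> lift_x n d p ` (convex hull (G_set n m d p f \<phi>))"
  then obtain z where z: "z \<in> convex hull (G_set n m d p f \<phi>)" and v: "v = lift_x n d p z" by blast
  then have supp: "supp_in (coordsZM n m d) z" and Delta: "in_Delta n d z"
    using convex_hull_G_set_subset by blast+
  have "supp_in (coords n m d) v"
    unfolding supp_in_def
  proof (intro allI impI)
    fix k assume "k \<notin> coords n m d"
    then show "v k = 0" using supp by (cases k) (auto simp: v lift_x_def supp_in_def)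
  qed
  moreover have "zmu_part v \<in> convex hull (G_set n m d p f \<phi>)"
    using z supp by (simp add: v zmu_part_lift_x)
  moreover have "x_part v \<in> Rn n" by (auto simp: v x_part_def Rn_def lift_x_def)
  moreover have "in_B d p i v" if "i \<in> {1..n}" for i
    using Delta that by (auto simp: v in_B_def lift_x_def in_Delta_def in_Delta_i_def)
  ultimately show "v \<in> Q_set n m d p (Rn n) f \<phi>" by (simp add: Q_set_def)
qed

lemma extreme_point_of_Q_set_binary:
  assumes extreme: "v extreme_point_of Q_set n m d p (Rn n) f \<phi>" and k: "k \<in> coordsZ n d"
  shows "v k \<in> {0, 1}"
proof -
  let ?C = "convex hull (G_set n m d p f \<phi>)"
  have inv: "zmu_part (lift_x n d p z) = z" if "z \<in> ?C" for z
    using that convex_hull_G_set_subset by (blast intro: zmu_part_lift_x)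
  obtain y where y: "y \<in> ?C" and v: "v = lift_x n d p y"
    using extreme Q_set_Rn_eq_image_lift_x by (auto simp: extreme_point_of_def)
  have "y extreme_point_of ?C"
  proof (rule extreme_point_of_affine_image[OF _ lift_x_combination _ y])
    show "inj_on (lift_x n d p) ?C" by (metis inj_onI inv)
    show "lift_x n d p y extreme_point_of lift_x n d p ` ?C"
      using extreme by (simp add: v Q_set_Rn_eq_image_lift_x)
  qed
  then have "y \<in> G_set n m d p f \<phi>" by (rule extreme_point_of_convex_hull)
  then have "y k \<in> {0, 1}" using k by (auto simp: G_set_def z_binary_def)
  moreover have "v k = y k" using k by (cases k) (auto simp: v lift_x_def)
  ultimately show ?thesis by simp
qed

theorem lemma1:
  fixes n m r :: nat and d :: "nat \<Rightarrow> nat" and p :: "nat \<Rightarrow> nat \<Rightarrow> real"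
    and A :: "nat \<Rightarrow> nat \<Rightarrow> real" and h :: "nat \<Rightarrow> real"
    and f :: "nat \<Rightarrow> nat \<Rightarrow> real \<Rightarrow> real" and L U :: "nat \<Rightarrow> nat \<Rightarrow> real"
    and \<phi> :: "nat \<Rightarrow> (nat \<Rightarrow> real) \<Rightarrow> real"
  assumes "n \<ge> 1" and "m \<ge> 1"
    and "\<forall>i\<in>{1..n}. d i \<ge> 1"
    and "\<forall>i\<in>{1..n}. \<forall>j<d i. p i j < p i (Suc j)"
    and "\<exists>B. \<forall>x\<in>Pset n r A h. \<forall>i\<in>{1..n}. \<bar>x i\<bar> \<le> B"
    and "\<forall>t\<in>{1..m}. \<forall>i\<in>{1..n}. \<forall>j\<in>{0..d i}. L t i \<le> f t i (p i j) \<and> f t i (p i j) \<le> U t i"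
  shows "mip_formulation (coords n m d) (coordsZ n d) (\<lambda>v. (x_part v, mu_part v))
           (Q_set n m d p (Pset n r A h) f \<phi>) (graph_set n m d p (Pset n r A h) f \<phi>)
         \<and> ideal_formulation (coords n m d) (coordsZ n d) (\<lambda>v. (x_part v, mu_part v))
           (Q_set n m d p (Rn n) f \<phi>) (graph_set n m d p (Rn n) f \<phi>)"
proof -
  have "Pset n 0 A h = Rn n" by (simp add: Pset_def)
  then have "polyhedron_on (coords n m d) (Q_set n m d p (Rn n) f \<phi>)"
    using polyhedron_on_Q_set[of n m d p 0 A h f \<phi>] by simp
  then show ?thesis
    unfolding ideal_formulation_def mip_formulation_def
    using polyhedron_on_Q_set[of n m d p r A h f \<phi>] image_binary_Q_set_eq_graph_set
      extreme_point_of_Q_set_binary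
    by blast
qed

end
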